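(* Let $f(x)=x^5+px^4+qx^3+rx^2+sx+t$ with real coefficients and let $D$, $L_1$, $L_2$, $D_2$ be as in the context. Suppose $D=0$, $L_1=0$ and $L_2\neq 0$. Then: (a) if $D_2>0$, $f$ has two distinct real double roots and one real simple root; (b) if $D_2<0$, $f$ has a pair of non-real complex conjugate double roots and one real simple root; (c) if $D_2=0$, $f$ has one triple root and two simple roots; in this case, if $L_2>0$ the triple root and both simple roots are real, and if $L_2<0$ the triple root is real and the two simple roots are non-real complex conjugates.
   Context: Let $\alpha_1,\dots,\alpha_5\in\mathbb{C}$ be the roots of $f$ listed with multiplicity. $D=\prod_{1\le i<j\le 5}(\alpha_i-\alpha_j)^2$ is the discriminant of $f$. $L_2=40qs-16p^2s-8rp^3+38rpq+3p^2q^2-12q^3-45r^2$. $L_1=-264ps^2r-12p^3tq^2+36r^3pq-124srpq^2+28srp^3q+260sptq-132p^2qrt+240pr^2t+234sqr^2+32p^4tr+48ptq^3-56sp^3t-80q^2rt+194qs^2p^2-600str-6q^3sp^2+2p^2q^2r^2-12sr^2p^2-54r^4+320s^3-8q^3r^2-8r^3p^3+250qt^2-176q^2s^2+24q^4s-36p^4s^2-100p^2t^2$. $D_2=24p^2q^4s-1100q^3rt+800p^3qst-1735p^2q^2rt-3p^2qr^2s+20pq^3rs-600p^2rst-1150pq^2st+5475pqr^2t-1380pqrs^2+1500qrst+6p^3qr^3+p^4q^2r^2-128p^6rt+660pq^4t-136p^5st-3p^4q^3s-236p^4qs^2+337p^2q^2s^2+48p^5q^2t-357p^3q^3t-12p^4r^2s-45pr^3s+60q^2r^2s-8p^2q^3r^2-500p^2qt^2-24pq^2r^3-1380p^3r^2t+408p^3rs^2-4p^5qrs+1028p^4qrt+11p^3q^2rs+36p^6s^2+100p^4t^2+9p^2r^4-48q^5s+16q^4r^2+160q^3s^2+625q^2t^2-3375r^3t+900r^2s^2$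 (a positive multiple of the discriminant of the degree-2 remainder in the Sturm sequence of $f$). *)

theory Defs
  imports "HOL-Computational_Algebra.Polynomial" Complex_Main
begin

definition quintic :: "real \<Rightarrow> real \<Rightarrow> real \<Rightarrow> real \<Rightarrow> real \<Rightarrow> real poly" where
  "quintic p q r s t = [:t, s, r, q, p, 1:]"

definition quinticC :: "real \<Rightarrow> real \<Rightarrow> real \<Rightarrow> real \<Rightarrow> real \<Rightarrow> complex poly" where
  "quinticC p q r s t = map_poly complex_of_real (quintic p q r s t)"

definition quintic_disc :: "real \<Rightarrow> real \<Rightarrow> real \<Rightarrow> real \<Rightarrow> real \<Rightarrow> complex" where
  "quintic_disc p q r s t =
     (let \<alpha> = (SOME \<alpha> :: nat \<Rightarrow> complex.
                 quinticC p q r s t = (\<Prod>i<5. [:- \<alpha> i, 1:]))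
      in \<Prod>i<5. \<Prod>j\<in>{i<..<5}. (\<alpha> i - \<alpha> j)^2)"

definition L2 :: "real \<Rightarrow> real \<Rightarrow> real \<Rightarrow> real \<Rightarrow> real \<Rightarrow> real" where
  "L2 p q r s t = 40*q*s-16*p^2*s-8*r*p^3+38*r*p*q+3*p^2*q^2-12*q^3-45*r^2"

definition L1 :: "real \<Rightarrow> real \<Rightarrow> real \<Rightarrow> real \<Rightarrow> real \<Rightarrow> real" where
  "L1 p q r s t = -264*p*s^2*r-12*p^3*t*q^2+36*r^3*p*q-124*s*r*p*q^2+28*s*r*p^3*q+260*s*p*t*q
    -132*p^2*q*r*t+240*p*r^2*t+234*s*q*r^2+32*p^4*t*r+48*p*t*q^3-56*s*p^3*t-80*q^2*r*t
    +194*q*s^2*p^2-600*s*t*r-6*q^3*s*p^2+2*p^2*q^2*r^2-12*s*r^2*p^2-54*r^4+320*s^3-8*q^3*r^2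
    -8*r^3*p^3+250*q*t^2-176*q^2*s^2+24*q^4*s-36*p^4*s^2-100*p^2*t^2"

definition D2 :: "real \<Rightarrow> real \<Rightarrow> real \<Rightarrow> real \<Rightarrow> real \<Rightarrow> real" where
  "D2 p q r s t = 24*p^2*q^4*s-1100*q^3*r*t+800*p^3*q*s*t-1735*p^2*q^2*r*t-3*p^2*q*r^2*s
    +20*p*q^3*r*s-600*p^2*r*s*t-1150*p*q^2*s*t+5475*p*q*r^2*t-1380*p*q*r*s^2+1500*q*r*s*t
    +6*p^3*q*r^3+p^4*q^2*r^2-128*p^6*r*t+660*p*q^4*t-136*p^5*s*t-3*p^4*q^3*s-236*p^4*q*s^2
    +337*p^2*q^2*s^2+48*p^5*q^2*t-357*p^3*q^3*t-12*p^4*r^2*s-45*p*r^3*s+60*q^2*r^2*s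
    -8*p^2*q^3*r^2-500*p^2*q*t^2-24*p*q^2*r^3-1380*p^3*r^2*t+408*p^3*r*s^2-4*p^5*q*r*s
    +1028*p^4*q*r*t+11*p^3*q^2*r*s+36*p^6*s^2+100*p^4*t^2+9*p^2*r^4-48*q^5*s+16*q^4*r^2
    +160*q^3*s^2+625*q^2*t^2-3375*r^3*t+900*r^2*s^2"

end

theory Submission
  imports Defs "HOL-Computational_Algebra.Fundamental_Theorem_Algebra"
begin

text \<open>Over \<open>\<complex>\<close> the quintic splits into linear factors. \<open>D = 0\<close> gives a double root \<open>u\<close>, and
  then the Vieta formulas turn \<open>L\<^sub>1\<close> into twice the squared Vandermonde product of \<open>u\<close> and the
  other three roots \<open>v, w, x\<close>; so \<open>L\<^sub>1 = 0\<close> forces a second coincidence, i.e. the root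
  pattern is 2+2+1 or 3+1+1. In both patterns \<open>L\<^sub>2\<close> is a nonzero multiple of the squared
  Vandermonde product of the three roots, so \<open>L\<^sub>2 \<noteq> 0\<close> makes them distinct. Since the
  coefficients are real, conjugation permutes the roots preserving multiplicities: the root of
  unique multiplicity is real and the other two are real or conjugate. The explicit values
  \<open>D\<^sub>2 = 4(a-b)\<^sup>6((a-c)(b-c))\<^sup>4\<close> resp. \<open>L\<^sub>2 = 3((a-b)(a-c)(b-c))\<^sup>2\<close> then have the
  stated signs.\<close>

lemma map_poly_cnj_mult: "map_poly cnj (p * q) = map_poly cnj p * map_poly cnj q"
  by (intro poly_eqI) (simp add: coeff_map_poly coeff_mult)

lemma map_poly_cnj_power: "map_poly cnj (p ^ n) = map_poly cnj p ^ n"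
  by (induction n) (simp_all add: map_poly_cnj_mult)

lemma order_map_poly_cnj:
  fixes p :: "complex poly"
  assumes "p \<noteq> 0"
  shows "order (cnj z) (map_poly cnj p) = order z p"
proof -
  have cnj_dvd: "[:-cnj w, 1:] ^ n dvd map_poly cnj P" if "[:-w, 1:] ^ n dvd P" for w n P
  proof -
    from that obtain k where "P = [:-w, 1:] ^ n * k" by (elim dvdE)
    then have "map_poly cnj P = [:-cnj w, 1:] ^ n * map_poly cnj k"
      by (simp add: map_poly_cnj_mult map_poly_cnj_power map_poly_pCons)
    then show ?thesis by simp
  qed
  have invol: "map_poly cnj (map_poly cnj p) = p"
    by (simp add: map_poly_map_poly o_def)
  have "map_poly cnj p \<noteq> 0"
    using assms invol by force
  then have "order z p \<le> order (cnj z) (map_poly cnj p)"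
    using cnj_dvd[OF order_1] order_divides by blast
  moreover have "order (cnj z) (map_poly cnj p) \<le> order z p"
    using cnj_dvd[OF order_1, of "cnj z" "map_poly cnj p"] assms order_divides
    unfolding invol complex_cnj_cnj by blast
  ultimately show ?thesis by simp
qed

lemma order_power:
  assumes "p \<noteq> 0"
  shows "order z (p ^ n) = n * order z p"
  using assms by (induction n) (simp_all add: order_mult)

lemma order_linear_factor: "order z [:-a, 1:] = (if z = a then 1 else 0)"
  using order_power_n_n[of a 1] by (auto intro: order_0I)

lemma conjugation_invariant_root_pattern:
  fixes a b c :: complex
  assumes cnj_P: "map_poly cnj P = P"
    and P: "P = [:-a, 1:] ^ m * ([:-b, 1:] * [:-c, 1:]) ^ n"
    and mn: "m \<noteq> n" "0 < m" "0 < n"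
    and distinct: "a \<noteq> b" "a \<noteq> c" "b \<noteq> c"
  shows "a \<in> \<real> \<and> (b \<in> \<real> \<and> c \<in> \<real> \<or> Im b \<noteq> 0 \<and> c = cnj b)"
proof -
  have nz: "[:-a, 1:] ^ m \<noteq> 0" "[:-b, 1:] * [:-c, 1:] \<noteq> 0" "P \<noteq> 0"
    using P by simp_all
  have "order z P = m * order z [:-a, 1:] + n * (order z [:-b, 1:] + order z [:-c, 1:])" for z
    using nz unfolding P
    by (simp only: order_mult order_power mult_eq_0_iff power_eq_0_iff pCons_eq_0_iff
        one_neq_zero simp_thms)
  then have ord: "order z P =
      (if z = a then m else 0) + (if z = b then n else 0) + (if z = c then n else 0)" for z
    by (simp add: order_linear_factor)
  have ord_cnj: "order (cnj z) P = order z P" for z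
    using order_map_poly_cnj[OF \<open>P \<noteq> 0\<close>] cnj_P by metis
  have a_real: "cnj a = a"
    using ord_cnj[of a] ord[of a] ord[of "cnj a"] mn distinct by (auto split: if_splits)
  have b_cases: "cnj b = b \<or> cnj b = c"
    using ord_cnj[of b] ord[of b] ord[of "cnj b"] a_real mn distinct by (auto split: if_splits)
  have c_real: "cnj c = c" if "cnj b = b"
    using ord_cnj[of c] ord[of c] ord[of "cnj c"] a_real that mn distinct by (auto split: if_splits)
  show ?thesis
  proof (cases "cnj b = b")
    case True
    then show ?thesis using a_real c_real by (simp add: Reals_cnj_iff)
  next
    case False
    then show ?thesis using a_real b_cases by (auto simp: Reals_cnj_iff complex_eq_iff)
  qed
qed

lemma power2_diff_cnj: "(z - cnj z)\<^sup>2 = - complex_of_real (4 * (Im z)\<^sup>2)"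
  by (simp add: complex_diff_cnj power_mult_distrib)

lemma diff_mult_cnj_diff:
  assumes "c \<in> \<real>"
  shows "(z - c) * (cnj z - c) = complex_of_real ((cmod (z - c))\<^sup>2)"
  using assms complex_norm_square[of "z - c"] by (simp add: Reals_cnj_iff)

lemma monic_complex_poly_splits:
  fixes P :: "complex poly"
  assumes "lead_coeff P = 1"
  shows "\<exists>\<alpha>. P = (\<Prod>i<degree P. [:-\<alpha> i, 1:])"
  using complex_poly_decompose'[of P] assms by (metis smult_1_left)

lemma quinticC_eq: "quinticC p q r s t = [:of_real t, of_real s, of_real r, of_real q, of_real p, 1:]"
  by (simp add: quinticC_def quintic_def map_poly_pCons)

lemma map_poly_cnj_quinticC: "map_poly cnj (quinticC p q r s t) = quinticC p q r s t"
  by (simp add: quinticC_eq map_poly_pCons)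

lemma linear_factors5_coeffs:
  fixes a b c d e :: "'a::comm_ring_1"
  shows "[:-a, 1:] * [:-b, 1:] * [:-c, 1:] * [:-d, 1:] * [:-e, 1:] =
    [:-(a*b*c*d*e), a*b*c*d + a*b*c*e + a*b*d*e + a*c*d*e + b*c*d*e,
      -(a*b*c + a*b*d + a*b*e + a*c*d + a*c*e + a*d*e + b*c*d + b*c*e + b*d*e + c*d*e),
      a*b + a*c + a*d + a*e + b*c + b*d + b*e + c*d + c*e + d*e, -(a + b + c + d + e), 1:]"
  by (simp add: algebra_simps)

lemma quinticC_vieta:
  assumes "quinticC p q r s t = [:-a, 1:] * [:-b, 1:] * [:-c, 1:] * [:-d, 1:] * [:-e, 1:]"
  shows "complex_of_real p = -(a + b + c + d + e)"
    and "complex_of_real q = a*b + a*c + a*d + a*e + b*c + b*d + b*e + c*d + c*e + d*e"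
    and "complex_of_real r =
      -(a*b*c + a*b*d + a*b*e + a*c*d + a*c*e + a*d*e + b*c*d + b*c*e + b*d*e + c*d*e)"
    and "complex_of_real s = a*b*c*d + a*b*c*e + a*b*d*e + a*c*d*e + b*c*d*e"
    and "complex_of_real t = -(a*b*c*d*e)"
  using assms unfolding quinticC_eq linear_factors5_coeffs by simp_all

lemma quinticC_double_root:
  assumes "quintic_disc p q r s t = 0"
  shows "\<exists>u v w x. quinticC p q r s t = [:-u, 1:]\<^sup>2 * [:-v, 1:] * [:-w, 1:] * [:-x, 1:]"
proof -
  define \<alpha> where "\<alpha> = (SOME \<alpha> :: nat \<Rightarrow> complex. quinticC p q r s t = (\<Prod>i<5. [:- \<alpha> i, 1:]))"
  define f where "f k = [:-\<alpha> k, 1:]" for k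
  have lead: "lead_coeff (quinticC p q r s t) = 1" and deg: "degree (quinticC p q r s t) = 5"
    by (simp_all add: quinticC_eq)
  have "\<exists>\<alpha>. quinticC p q r s t = (\<Prod>i<(5::nat). [:- \<alpha> i, 1:])"
    using monic_complex_poly_splits[OF lead] unfolding deg .
  then have roots: "quinticC p q r s t = (\<Prod>k<5. f k)"
    unfolding \<alpha>_def f_def by (rule someI_ex)
  have "quintic_disc p q r s t = (\<Prod>i<5. \<Prod>j\<in>{i<..<5}. (\<alpha> i - \<alpha> j)\<^sup>2)"
    unfolding quintic_disc_def Let_def \<alpha>_def ..
  with assms obtain i j where ij: "i < 5" "i < j" "j < 5" "\<alpha> i = \<alpha> j"
    by (auto simp: prod_zero_iff)
  then have "card ({..<5} - {i} - {j}) = 3"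
    by (simp add: card_Diff_subset)
  then obtain k1 k2 k3 where rest: "{..<5} - {i} - {j} = {k1, k2, k3}" "k1 \<noteq> k2" "k2 \<noteq> k3" "k1 \<noteq> k3"
    unfolding card_3_iff by blast
  have "(\<Prod>k<5. f k) = f i * (\<Prod>k\<in>{..<5} - {i}. f k)"
    using ij by (intro prod.remove) auto
  also have "(\<Prod>k\<in>{..<5} - {i}. f k) = f j * (\<Prod>k\<in>{..<5} - {i} - {j}. f k)"
    using ij by (intro prod.remove) auto
  also have "(\<Prod>k\<in>{..<5} - {i} - {j}. f k) = f k1 * f k2 * f k3"
    using rest by (simp add: mult.assoc)
  also have "f j = f i"
    using ij by (simp add: f_def)
  finally have "quinticC p q r s t = (f i)\<^sup>2 * f k1 * f k2 * f k3"
    using roots by (simp only: power2_eq_square mult.assoc)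
  then show ?thesis
    unfolding f_def by blast
qed

lemmas of_real_ring_simps =
  of_real_add of_real_diff of_real_mult of_real_power of_real_numeral of_real_minus

lemma L1_double_root:
  assumes "quinticC p q r s t = [:-u, 1:]\<^sup>2 * [:-v, 1:] * [:-w, 1:] * [:-x, 1:]"
  shows "complex_of_real (L1 p q r s t) = 2 * ((u-v) * (u-w) * (u-x) * (v-w) * (v-x) * (w-x))\<^sup>2"
proof -
  have "quinticC p q r s t = [:-u, 1:] * [:-u, 1:] * [:-v, 1:] * [:-w, 1:] * [:-x, 1:]"
    using assms by (simp only: power2_eq_square)
  note vieta = quinticC_vieta[OF this]
  show ?thesis
    unfolding L1_def of_real_ring_simps vieta by algebra
qed

lemma L2_D2_two_double_roots:
  assumes "quinticC p q r s t = [:-a, 1:]\<^sup>2 * [:-b, 1:]\<^sup>2 * [:-c, 1:]"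
  shows "complex_of_real (L2 p q r s t) = 4 * ((a-b) * (a-c) * (b-c))\<^sup>2"
    and "complex_of_real (D2 p q r s t) = 4 * (a-b)^6 * ((a-c) * (b-c))^4"
proof -
  have "quinticC p q r s t = [:-a, 1:] * [:-a, 1:] * [:-b, 1:] * [:-b, 1:] * [:-c, 1:]"
    using assms by (simp only: power2_eq_square mult_ac)
  note vieta = quinticC_vieta[OF this]
  show "complex_of_real (L2 p q r s t) = 4 * ((a-b) * (a-c) * (b-c))\<^sup>2"
    unfolding L2_def of_real_ring_simps vieta by algebra
  show "complex_of_real (D2 p q r s t) = 4 * (a-b)^6 * ((a-c) * (b-c))^4"
    unfolding D2_def of_real_ring_simps vieta by algebra
qed

lemma L2_D2_triple_root:
  assumes "quinticC p q r s t = [:-a, 1:]^3 * [:-b, 1:] * [:-c, 1:]"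
  shows "complex_of_real (L2 p q r s t) = 3 * ((a-b) * (a-c) * (b-c))\<^sup>2"
    and "D2 p q r s t = 0"
proof -
  have "quinticC p q r s t = [:-a, 1:] * [:-a, 1:] * [:-a, 1:] * [:-b, 1:] * [:-c, 1:]"
    using assms by (simp only: power3_eq_cube)
  note vieta = quinticC_vieta[OF this]
  show "complex_of_real (L2 p q r s t) = 3 * ((a-b) * (a-c) * (b-c))\<^sup>2"
    unfolding L2_def of_real_ring_simps vieta by algebra
  have "complex_of_real (D2 p q r s t) = 0"
    unfolding D2_def of_real_ring_simps vieta by algebra
  then show "D2 p q r s t = 0" by simp
qed

lemma quinticC_root_patterns:
  assumes "quintic_disc p q r s t = 0" and "L1 p q r s t = 0"
  shows "(\<exists>a b c. quinticC p q r s t = [:-a, 1:]\<^sup>2 * [:-b, 1:]\<^sup>2 * [:-c, 1:])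
       \<or> (\<exists>a b c. quinticC p q r s t = [:-a, 1:]^3 * [:-b, 1:] * [:-c, 1:])"
proof -
  obtain u v w x where P: "quinticC p q r s t = [:-u, 1:]\<^sup>2 * [:-v, 1:] * [:-w, 1:] * [:-x, 1:]"
    using quinticC_double_root[OF assms(1)] by blast
  have "(u-v) * (u-w) * (u-x) * (v-w) * (v-x) * (w-x) = 0"
    using L1_double_root[OF P] assms(2) by simp
  then consider "u = v" | "u = w" | "u = x" | "v = w" | "v = x" | "w = x"
    by auto
  then show ?thesis
  proof cases
    case 1
    then have "quinticC p q r s t = [:-u, 1:]^3 * [:-w, 1:] * [:-x, 1:]"
      using P by (simp only: power2_eq_square power3_eq_cube mult_ac)
    then show ?thesis by blast
  next
    case 2
    then have "quinticC p q r s t = [:-u, 1:]^3 * [:-v, 1:] * [:-x, 1:]"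
      using P by (simp only: power2_eq_square power3_eq_cube mult_ac)
    then show ?thesis by blast
  next
    case 3
    then have "quinticC p q r s t = [:-u, 1:]^3 * [:-v, 1:] * [:-w, 1:]"
      using P by (simp only: power2_eq_square power3_eq_cube mult_ac)
    then show ?thesis by blast
  next
    case 4
    then have "quinticC p q r s t = [:-u, 1:]\<^sup>2 * [:-v, 1:]\<^sup>2 * [:-x, 1:]"
      using P by (simp only: power2_eq_square mult_ac)
    then show ?thesis by blast
  next
    case 5
    then have "quinticC p q r s t = [:-u, 1:]\<^sup>2 * [:-v, 1:]\<^sup>2 * [:-w, 1:]"
      using P by (simp only: power2_eq_square mult_ac)
    then show ?thesis by blast
  next
    case 6
    then have "quinticC p q r s t = [:-u, 1:]\<^sup>2 * [:-w, 1:]\<^sup>2 * [:-v, 1:]"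
      using P by (simp only: power2_eq_square mult_ac)
    then show ?thesis by blast
  qed
qed

lemma quinticC_two_double_roots:
  assumes P: "quinticC p q r s t = [:-a, 1:]\<^sup>2 * [:-b, 1:]\<^sup>2 * [:-c, 1:]"
    and "L2 p q r s t \<noteq> 0"
  shows "D2 p q r s t > 0 \<and> (\<exists>A B C :: real. A \<noteq> B \<and> A \<noteq> C \<and> B \<noteq> C \<and>
           quinticC p q r s t = [:-of_real A, 1:]\<^sup>2 * [:-of_real B, 1:]\<^sup>2 * [:-of_real C, 1:])
       \<or> D2 p q r s t < 0 \<and> (\<exists>z (C :: real). Im z \<noteq> 0 \<and>
           quinticC p q r s t = [:-z, 1:]\<^sup>2 * [:-cnj z, 1:]\<^sup>2 * [:-of_real C, 1:])"
proof -
  note L2 = L2_D2_two_double_roots(1)[OF P] and D2 = L2_D2_two_double_roots(2)[OF P]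
  have distinct: "a \<noteq> b" "a \<noteq> c" "b \<noteq> c"
    using L2 assms(2) by auto
  have "quinticC p q r s t = [:-c, 1:] ^ 1 * ([:-a, 1:] * [:-b, 1:])\<^sup>2"
    unfolding P by (simp only: power_one_right power_mult_distrib mult_ac)
  from conjugation_invariant_root_pattern[OF map_poly_cnj_quinticC this] distinct
  consider (real) "a \<in> \<real>" "b \<in> \<real>" "c \<in> \<real>" | (conj) "Im a \<noteq> 0" "b = cnj a" "c \<in> \<real>"
    by fastforce
  then show ?thesis
  proof cases
    case real
    then obtain A B C where ABC: "a = of_real A" "b = of_real B" "c = of_real C"
      by (metis Reals_cases)
    then have "complex_of_real (D2 p q r s t) = of_real (4 * (A-B)^6 * ((A-C) * (B-C))^4)"
      using D2 by simp
    then have "D2 p q r s t = 4 * (A-B)^6 * ((A-C) * (B-C))^4"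
      by (simp only: of_real_eq_iff)
    moreover have "A \<noteq> B" "A \<noteq> C" "B \<noteq> C"
      using distinct ABC by auto
    ultimately have "D2 p q r s t > 0"
      by (simp add: zero_less_power_eq)
    moreover have "quinticC p q r s t = [:-of_real A, 1:]\<^sup>2 * [:-of_real B, 1:]\<^sup>2 * [:-of_real C, 1:]"
      using P ABC by (simp only:)
    ultimately show ?thesis
      using \<open>A \<noteq> B\<close> \<open>A \<noteq> C\<close> \<open>B \<noteq> C\<close> by blast
  next
    case conj
    have "complex_of_real (D2 p q r s t) = 4 * ((a - cnj a)\<^sup>2)^3 * ((a - c) * (cnj a - c))^4"
      using D2 conj by (simp add: power_mult_distrib[symmetric] power_mult[symmetric])
    also have "\<dots> = of_real (- 256 * (Im a)^6 * (cmod (a - c))^8)"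
      using conj by (simp add: power2_diff_cnj diff_mult_cnj_diff power_mult_distrib
          flip: power_mult)
    finally have "D2 p q r s t = - 256 * (Im a)^6 * (cmod (a - c))^8"
      by (simp only: of_real_eq_iff)
    then have "D2 p q r s t < 0"
      using conj distinct by (simp add: zero_less_power_eq)
    moreover have "c = of_real (Re c)"
      using conj by (simp add: complex_is_Real_iff complex_eq_iff)
    ultimately show ?thesis
      using P conj by metis
  qed
qed

lemma quinticC_triple_root:
  assumes P: "quinticC p q r s t = [:-a, 1:]^3 * [:-b, 1:] * [:-c, 1:]"
    and "L2 p q r s t \<noteq> 0"
  shows "D2 p q r s t = 0 \<and> a \<noteq> b \<and> a \<noteq> c \<and> b \<noteq> c
    \<and> (L2 p q r s t > 0 \<longrightarrow> a \<in> \<real> \<and> b \<in> \<real> \<and> c \<in> \<real>)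
    \<and> (L2 p q r s t < 0 \<longrightarrow> a \<in> \<real> \<and> Im b \<noteq> 0 \<and> c = cnj b)"
proof -
  note L2 = L2_D2_triple_root(1)[OF P]
  have distinct: "a \<noteq> b" "a \<noteq> c" "b \<noteq> c"
    using L2 assms(2) by auto
  have "quinticC p q r s t = [:-a, 1:] ^ 3 * ([:-b, 1:] * [:-c, 1:]) ^ 1"
    unfolding P by (simp only: power_one_right mult_ac)
  from conjugation_invariant_root_pattern[OF map_poly_cnj_quinticC this] distinct
  have a_real: "a \<in> \<real>" and bc_cases: "b \<in> \<real> \<and> c \<in> \<real> \<or> Im b \<noteq> 0 \<and> c = cnj b"
    by simp_all
  have "L2 p q r s t > 0" if real: "b \<in> \<real>" "c \<in> \<real>"
  proof -
    obtain A B C where ABC: "a = of_real A" "b = of_real B" "c = of_real C"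
      using a_real real by (metis Reals_cases)
    then have "complex_of_real (L2 p q r s t) = of_real (3 * ((A-B) * (A-C) * (B-C))\<^sup>2)"
      using L2 by simp
    then have "L2 p q r s t = 3 * ((A-B) * (A-C) * (B-C))\<^sup>2"
      by (simp only: of_real_eq_iff)
    then show ?thesis
      using distinct ABC by simp
  qed
  moreover have "L2 p q r s t < 0" if conj: "Im b \<noteq> 0" "c = cnj b"
  proof -
    have "complex_of_real (L2 p q r s t) = 3 * ((b - a) * (cnj b - a))\<^sup>2 * (b - cnj b)\<^sup>2"
      unfolding L2 \<open>c = cnj b\<close> by algebra
    also have "\<dots> = of_real (- 12 * (cmod (b - a))^4 * (Im b)\<^sup>2)"
      using a_real by (simp add: power2_diff_cnj diff_mult_cnj_diff flip: power_mult)
    finally have "L2 p q r s t = - 12 * (cmod (b - a))^4 * (Im b)\<^sup>2"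
      by (simp only: of_real_eq_iff)
    then show ?thesis
      using conj distinct by simp
  qed
  ultimately show ?thesis
    using L2_D2_triple_root(2)[OF P] distinct a_real bc_cases by auto
qed

theorem mainTheorem3:
  fixes p q r s t :: real
  assumes hD: "quintic_disc p q r s t = 0"
    and hL1: "L1 p q r s t = 0"
    and hL2: "L2 p q r s t \<noteq> 0"
  shows
    "(D2 p q r s t > 0 \<longrightarrow>
        (\<exists>a b c :: real. a \<noteq> b \<and> a \<noteq> c \<and> b \<noteq> c \<and>
           quinticC p q r s t =
             [:- complex_of_real a, 1:]^2 * [:- complex_of_real b, 1:]^2 * [:- complex_of_real c, 1:]))
   \<and> (D2 p q r s t < 0 \<longrightarrow>
        (\<exists>(z :: complex) (c :: real). Im z \<noteq> 0 \<and>
           quinticC p q r s t =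
             [:- z, 1:]^2 * [:- cnj z, 1:]^2 * [:- complex_of_real c, 1:]))
   \<and> (D2 p q r s t = 0 \<longrightarrow>
        (\<exists>a b c :: complex. a \<noteq> b \<and> a \<noteq> c \<and> b \<noteq> c \<and>
           quinticC p q r s t = [:- a, 1:]^3 * [:- b, 1:] * [:- c, 1:] \<and>
           (L2 p q r s t > 0 \<longrightarrow> a \<in> \<real> \<and> b \<in> \<real> \<and> c \<in> \<real>) \<and>
           (L2 p q r s t < 0 \<longrightarrow> a \<in> \<real> \<and> Im b \<noteq> 0 \<and> c = cnj b)))"
  using quinticC_root_patterns[OF hD hL1]
proof (elim disjE exE)
  fix a b c
  assume "quinticC p q r s t = [:-a, 1:]\<^sup>2 * [:-b, 1:]\<^sup>2 * [:-c, 1:]"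
  from quinticC_two_double_roots[OF this hL2] show ?thesis
    by auto
next
  fix a b c
  assume P: "quinticC p q r s t = [:-a, 1:]^3 * [:-b, 1:] * [:-c, 1:]"
  from quinticC_triple_root[OF P hL2] show ?thesis
    using P by auto
qed

end
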